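(* Let $q$ be a prime power and $F/\mathbb{F}_q$ an algebraic function field with full constant field $\mathbb{F}_q$ of genus $g\geq 2$. For $n\geq 0$ let $A_n$ be the number of effective divisors of degree $n$ of $F$, for $r\geq 1$ let $B_r$ be the number of places of degree $r$ of $F$, let $\Sigma_2=q^{g-1}\sum_{n=0}^{g-2}A_n/q^n$, let $\Delta_2=\{r:1\leq r\leq g-2,\ B_r\geq 1\}$ and $\Delta_2'=\Delta_2\setminus\{1\}$. (1) Suppose $B_1\geq 1$. Let $(m_r)_{r\in\Delta_2}$ be integers with $m_r\geq 0$ and $\sum_{r\in\Delta_2} r\,m_r\leq g-2$. Then $$\Sigma_2\geq q^{g-1}\prod_{r\in\Delta_2}\left[\sum_{b=0}^{m_r}\frac{1}{q^{rb}}\binom{B_r+b-1}{b}\right].$$ (2) Let $r_1,\dots,r_u$ be distinct elements of $\Delta_2'$. Then $$\Sigma_2\geq q^{g-1}\sum_{b_1=0}^{g-2}\frac{1}{q^{b_1}}\binom{B_1+b_1-1}{b_1}+q^{g-1}\sum_{i=1}^u\left[\sum_{b_1=0}^{(g-2)\bmod r_i}\frac{1}{q^{b_1}}\binom{B_1+b_1-1}{b_1}\right]\left[\sum_{b=0}^{\lfloor\frac{g-2}{r_i}\rfloor}\frac{1}{q^{r_ib}}\binom{B_{r_i}+b-1}{b}-1\right].$$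
   Context: $(g-2)\bmod r$ denotes the remainder of the Euclidean division of $g-2$ by $r$. Binomial coefficients $\binom{B+b-1}{b}$ (the number of multisets of size $b$ from a set of size $B$) follow the convention that for $B=0$ they equal $1$ if $b=0$ and $0$ if $b\geq 1$. *)

theory Defs
  imports Complex_Main "HOL-Library.Multiset" "HOL-Computational_Algebra.Primes"
begin

text \<open>Abstract model of the places of a function field: a set P of places with a
degree function deg. Effective divisors are finite formal sums of places with
nonnegative coefficients, i.e. multisets of places.\<close>

definition eff_divisors :: "'a set \<Rightarrow> ('a \<Rightarrow> nat) \<Rightarrow> nat \<Rightarrow> 'a multiset set" where
  "eff_divisors P deg n = {D. set_mset D \<subseteq> P \<and> sum_mset (image_mset deg D) = n}"

definition A_num :: "'a set \<Rightarrow> ('a \<Rightarrow> nat) \<Rightarrow> nat \<Rightarrow> nat" where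
  "A_num P deg n = card (eff_divisors P deg n)"

definition B_num :: "'a set \<Rightarrow> ('a \<Rightarrow> nat) \<Rightarrow> nat \<Rightarrow> nat" where
  "B_num P deg r = card {p \<in> P. deg p = r}"

definition Sigma2 :: "'a set \<Rightarrow> ('a \<Rightarrow> nat) \<Rightarrow> nat \<Rightarrow> nat \<Rightarrow> real" where
  "Sigma2 P deg q g = real q ^ (g - 1) * (\<Sum>n = 0..g - 2. real (A_num P deg n) / real q ^ n)"

definition Delta2 :: "'a set \<Rightarrow> ('a \<Rightarrow> nat) \<Rightarrow> nat \<Rightarrow> nat set" where
  "Delta2 P deg g = {r. 1 \<le> r \<and> r \<le> g - 2 \<and> B_num P deg r \<ge> 1}"

text \<open>Number of multisets of size b from a set of size B, with the stated convention for B = 0.\<close>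
definition multichoose :: "nat \<Rightarrow> nat \<Rightarrow> nat" where
  "multichoose B b = (if B = 0 then (if b = 0 then 1 else 0) else (B + b - 1) choose b)"

definition prime_power :: "nat \<Rightarrow> bool" where
  "prime_power q \<longleftrightarrow> (\<exists>p k. prime p \<and> k \<ge> 1 \<and> q = p ^ k)"

end

theory Submission
  imports Defs
begin

text \<open>Up to the factor \<open>q^(g-1)\<close>, \<open>\<Sigma>\<^sub>2\<close> is the total weight \<open>\<Sum> q^(-deg D)\<close> of the effective
  divisors \<open>D\<close> of degree at most \<open>g - 2\<close>, so every family of such divisors bounds it from
  below. If the number of places of each degree \<open>r\<close> in \<open>D\<close> is capped by \<open>m r\<close>, the weight
  factorises over the degrees, and the divisors made of \<open>b\<close> places of degree \<open>r\<close> are the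
  \<open>b\<close>-multisets of the \<open>B\<^sub>r\<close> places of degree \<open>r\<close>, each of weight \<open>q^(-r b)\<close>; this gives (1).
  For (2), the divisors made of places of degree 1 and, for each \<open>r\<close>, those with between 1 and
  \<open>(g-2) div r\<close> places of degree \<open>r\<close> and at most \<open>(g-2) mod r\<close> places of degree 1 form
  pairwise disjoint families. Neither argument uses that \<open>q\<close> is a prime power, nor \<open>g \<ge> 2\<close>,
  nor \<open>B\<^sub>1 \<ge> 1\<close>.\<close>

definition divisor_deg :: "('a \<Rightarrow> nat) \<Rightarrow> 'a multiset \<Rightarrow> nat" where
  "divisor_deg deg D = sum_mset (image_mset deg D)"

definition divisor_weight :: "nat \<Rightarrow> ('a \<Rightarrow> nat) \<Rightarrow> 'a multiset \<Rightarrow> real" where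
  "divisor_weight q deg D = 1 / real q ^ divisor_deg deg D"

definition divisors_upto :: "'a set \<Rightarrow> ('a \<Rightarrow> nat) \<Rightarrow> nat \<Rightarrow> 'a multiset set" where
  "divisors_upto P deg N = {D. set_mset D \<subseteq> P \<and> divisor_deg deg D \<le> N}"

definition capped_divisors ::
    "'a set \<Rightarrow> ('a \<Rightarrow> nat) \<Rightarrow> nat set \<Rightarrow> (nat \<Rightarrow> nat) \<Rightarrow> 'a multiset set" where
  "capped_divisors P deg K m = {D. set_mset D \<subseteq> P \<and> (\<forall>x\<in>#D. deg x \<in> K) \<and>
      (\<forall>r\<in>K. size (filter_mset (\<lambda>x. deg x = r) D) \<le> m r)}"

text \<open>The power series of \<open>(1 - t^r)^(-B\<^sub>r)\<close>, the degree \<open>r\<close> factor of the zeta function,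
  truncated after \<open>t^(r M)\<close> and evaluated at \<open>t = 1/q\<close>.\<close>

definition truncated_factor :: "'a set \<Rightarrow> ('a \<Rightarrow> nat) \<Rightarrow> nat \<Rightarrow> nat \<Rightarrow> nat \<Rightarrow> real" where
  "truncated_factor P deg q r M =
    (\<Sum>b = 0..M. real (multichoose (B_num P deg r) b) / real q ^ (r * b))"

lemma divisor_deg_add [simp]: "divisor_deg deg (A + B) = divisor_deg deg A + divisor_deg deg B"
  by (simp add: divisor_deg_def)

lemma divisor_deg_empty [simp]: "divisor_deg deg {#} = 0"
  by (simp add: divisor_deg_def)

lemma divisor_weight_add:
  "divisor_weight q deg (A + B) = divisor_weight q deg A * divisor_weight q deg B"
  by (simp add: divisor_weight_def power_add)

lemma divisor_deg_const: "(\<And>x. x \<in># D \<Longrightarrow> deg x = k) \<Longrightarrow> divisor_deg deg D = k * size D"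
  by (induction D) (auto simp: divisor_deg_def)

lemma size_le_divisor_deg: "\<forall>x\<in>#D. deg x \<ge> 1 \<Longrightarrow> size D \<le> divisor_deg deg D"
  by (induction D) (auto simp: divisor_deg_def)

lemma deg_le_divisor_deg: "x \<in># D \<Longrightarrow> deg x \<le> divisor_deg deg D"
  by (induction D) (auto simp: divisor_deg_def)

lemma filter_mset_eq_self: "\<forall>x\<in>#M. Q x \<Longrightarrow> filter_mset Q M = M"
  by (induction M) auto

lemma filter_mset_eq_empty: "\<forall>x\<in>#M. \<not> Q x \<Longrightarrow> filter_mset Q M = {#}"
  by (induction M) auto

lemma multichoose_eq_choose: "multichoose B b = (B + b - 1) choose b"
  by (cases b) (auto simp: multichoose_def)

subsection \<open>Finiteness and the weight form of \<open>\<Sigma>\<^sub>2\<close>\<close>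

lemma finite_divisors_upto:
  assumes deg_pos: "\<forall>p\<in>P. deg p \<ge> 1" and fin: "\<forall>r. finite {p \<in> P. deg p = r}"
  shows "finite (divisors_upto P deg N)"
proof (rule finite_subset)
  have "{p \<in> P. deg p \<le> N} = (\<Union>r\<le>N. {p \<in> P. deg p = r})"
    by auto
  then show "finite (\<Union>b\<le>N. multisets_of_size {p \<in> P. deg p \<le> N} b)"
    using fin by (auto intro: finite_multisets_of_size)
  show "divisors_upto P deg N \<subseteq> (\<Union>b\<le>N. multisets_of_size {p \<in> P. deg p \<le> N} b)"
  proof
    fix D assume D: "D \<in> divisors_upto P deg N"
    then have "size D \<le> N"
      using size_le_divisor_deg[of D deg] deg_pos by (fastforce simp: divisors_upto_def)
    moreover have "set_mset D \<subseteq> {p \<in> P. deg p \<le> N}"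
      using D deg_le_divisor_deg[of _ D deg] by (fastforce simp: divisors_upto_def)
    ultimately show "D \<in> (\<Union>b\<le>N. multisets_of_size {p \<in> P. deg p \<le> N} b)"
      by (auto simp: multisets_of_size_def)
  qed
qed

lemma sum_A_num_eq_weight_sum:
  assumes deg_pos: "\<forall>p\<in>P. deg p \<ge> 1" and fin: "\<forall>r. finite {p \<in> P. deg p = r}"
  shows "(\<Sum>n = 0..N. real (A_num P deg n) / real q ^ n) =
    (\<Sum>D\<in>divisors_upto P deg N. divisor_weight q deg D)"
proof -
  have upto_eq: "divisors_upto P deg N = (\<Union>n\<in>{0..N}. eff_divisors P deg n)"
    by (auto simp: divisors_upto_def eff_divisors_def divisor_deg_def)
  have fin_eff: "finite (eff_divisors P deg n)" if "n \<in> {0..N}" for n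
    using finite_divisors_upto[OF assms, of N] that by (auto simp: upto_eq)
  have "(\<Sum>D\<in>divisors_upto P deg N. divisor_weight q deg D) =
      (\<Sum>n = 0..N. \<Sum>D\<in>eff_divisors P deg n. divisor_weight q deg D)"
    unfolding upto_eq by (rule sum.UNION_disjoint) (auto simp: fin_eff, auto simp: eff_divisors_def)
  also have "\<dots> = (\<Sum>n = 0..N. real (A_num P deg n) / real q ^ n)"
    by (intro sum.cong) (auto simp: A_num_def eff_divisors_def divisor_weight_def divisor_deg_def)
  finally show ?thesis ..
qed

lemma Sigma2_ge_weight_sum:
  assumes deg_pos: "\<forall>p\<in>P. deg p \<ge> 1" and fin: "\<forall>r. finite {p \<in> P. deg p = r}"
    and S: "S \<subseteq> divisors_upto P deg (g - 2)"
  shows "Sigma2 P deg q g \<ge> real q ^ (g - 1) * (\<Sum>D\<in>S. divisor_weight q deg D)"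
proof -
  have "(\<Sum>D\<in>S. divisor_weight q deg D) \<le> (\<Sum>D\<in>divisors_upto P deg (g - 2). divisor_weight q deg D)"
    by (rule sum_mono2[OF finite_divisors_upto[OF deg_pos fin] S]) (simp add: divisor_weight_def)
  then show ?thesis
    unfolding Sigma2_def sum_A_num_eq_weight_sum[OF deg_pos fin] by (simp add: mult_left_mono)
qed

subsection \<open>Divisors with capped numbers of places of each degree\<close>

lemma capped_divisors_empty: "capped_divisors P deg {} m = {{#}}"
  by (auto simp: capped_divisors_def)

lemma capped_divisors_singleton:
  "capped_divisors P deg {k} m = (\<Union>b\<in>{0..m k}. multisets_of_size {p \<in> P. deg p = k} b)"
  by (auto simp: capped_divisors_def multisets_of_size_def filter_mset_eq_self
      intro: order_trans[OF size_filter_mset_lesseq])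

lemma weight_sum_capped_divisors_singleton:
  assumes fin: "finite {p \<in> P. deg p = k}"
  shows "(\<Sum>D\<in>capped_divisors P deg {k} m. divisor_weight q deg D) =
    truncated_factor P deg q k (m k)"
proof -
  let ?M = "multisets_of_size {p \<in> P. deg p = k}"
  have "(\<Sum>D\<in>capped_divisors P deg {k} m. divisor_weight q deg D) =
      (\<Sum>b = 0..m k. \<Sum>D\<in>?M b. divisor_weight q deg D)"
    unfolding capped_divisors_singleton
    by (rule sum.UNION_disjoint) (auto simp: fin finite_multisets_of_size, auto simp: multisets_of_size_def)
  also have "\<dots> = (\<Sum>b = 0..m k. \<Sum>D\<in>?M b. 1 / real q ^ (k * b))"
  proof (intro sum.cong refl)
    fix b D assume "D \<in> ?M b"
    then have "divisor_deg deg D = k * b"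
      by (subst divisor_deg_const) (auto simp: multisets_of_size_def)
    then show "divisor_weight q deg D = 1 / real q ^ (k * b)"
      by (simp add: divisor_weight_def)
  qed
  also have "\<dots> = truncated_factor P deg q k (m k)"
    using card_multisets_of_size[OF fin]
    by (simp add: truncated_factor_def multichoose_eq_choose B_num_def)
  finally show ?thesis .
qed

lemma capped_divisors_insert_iff:
  assumes "k \<notin> K"
  shows "D \<in> capped_divisors P deg (insert k K) m \<longleftrightarrow>
    filter_mset (\<lambda>x. deg x = k) D \<in> capped_divisors P deg {k} m \<and>
    filter_mset (\<lambda>x. deg x \<noteq> k) D \<in> capped_divisors P deg K m"
proof -
  have "filter_mset (\<lambda>x. deg x \<noteq> k \<and> deg x = r) D = filter_mset (\<lambda>x. deg x = r) D" if "r \<in> K" for r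
    using that assms by (intro filter_mset_cong) auto
  then show ?thesis
    by (auto simp: capped_divisors_def filter_filter_mset)
qed

lemma bij_betw_capped_divisors_insert:
  assumes "k \<notin> K"
  shows "bij_betw (\<lambda>(A, B). A + B) (capped_divisors P deg {k} m \<times> capped_divisors P deg K m)
    (capped_divisors P deg (insert k K) m)"
proof -
  have split: "filter_mset (\<lambda>x. deg x = k) (A + B) = A \<and> filter_mset (\<lambda>x. deg x \<noteq> k) (A + B) = B"
    if "A \<in> capped_divisors P deg {k} m" "B \<in> capped_divisors P deg K m" for A B
  proof -
    have "\<forall>x\<in>#A. deg x = k" "\<forall>x\<in>#B. deg x \<noteq> k"
      using that assms by (auto simp: capped_divisors_def)
    then show ?thesis
      by (simp add: filter_mset_eq_self filter_mset_eq_empty)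
  qed
  show ?thesis
  proof (rule bij_betw_byWitness[where f' = "\<lambda>D. (filter_mset (\<lambda>x. deg x = k) D,
      filter_mset (\<lambda>x. deg x \<noteq> k) D)"], goal_cases)
    case 1
    show ?case
      using split by auto
  next
    case 2
    show ?case
      by (simp add: multiset_partition[symmetric])
  next
    case 3
    show ?case
      using split by (auto simp: capped_divisors_insert_iff[OF assms])
  next
    case 4
    show ?case
      by (auto simp: capped_divisors_insert_iff[OF assms])
  qed
qed

lemma finite_capped_divisors:
  assumes "finite K" and fin: "\<forall>r. finite {p \<in> P. deg p = r}"
  shows "finite (capped_divisors P deg K m)"
  using assms(1)
proof (induction K rule: finite_induct)
  case empty
  then show ?case
    by (simp add: capped_divisors_empty)
next
  case (insert k K)
  have "finite (capped_divisors P deg {k} m)"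
    using fin by (auto simp: capped_divisors_singleton intro: finite_multisets_of_size)
  then show ?case
    using bij_betw_finite[OF bij_betw_capped_divisors_insert[OF insert(2), of P deg m]] insert.IH by simp
qed

lemma weight_sum_capped_divisors:
  assumes "finite K" and fin: "\<forall>r. finite {p \<in> P. deg p = r}"
  shows "(\<Sum>D\<in>capped_divisors P deg K m. divisor_weight q deg D) =
    (\<Prod>r\<in>K. truncated_factor P deg q r (m r))"
  using assms(1)
proof (induction K rule: finite_induct)
  case empty
  then show ?case
    by (simp add: capped_divisors_empty divisor_weight_def)
next
  case (insert k K)
  let ?w = "divisor_weight q deg"
  have "(\<Sum>D\<in>capped_divisors P deg (insert k K) m. ?w D) =
      (\<Sum>(A, B)\<in>capped_divisors P deg {k} m \<times> capped_divisors P deg K m. ?w A * ?w B)"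
    by (subst sum.reindex_bij_betw[OF bij_betw_capped_divisors_insert[OF insert(2)], symmetric])
      (simp add: case_prod_unfold divisor_weight_add)
  also have "\<dots> = (\<Sum>A\<in>capped_divisors P deg {k} m. ?w A) * (\<Sum>B\<in>capped_divisors P deg K m. ?w B)"
    by (simp add: sum.cartesian_product sum_product)
  finally show ?case
    by (simp add: insert weight_sum_capped_divisors_singleton fin)
qed

lemma divisor_deg_capped_divisors_le:
  assumes "finite K" "D \<in> capped_divisors P deg K m"
  shows "divisor_deg deg D \<le> (\<Sum>r\<in>K. r * m r)"
  using assms
proof (induction K arbitrary: D rule: finite_induct)
  case empty
  then show ?case
    by (simp add: capped_divisors_empty)
next
  case (insert k K)
  have "D \<in> (\<lambda>(A, B). A + B) ` (capped_divisors P deg {k} m \<times> capped_divisors P deg K m)"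
    using insert(4) bij_betw_imp_surj_on[OF bij_betw_capped_divisors_insert[OF insert(2)]] by metis
  then obtain A B where AB: "A \<in> capped_divisors P deg {k} m" "B \<in> capped_divisors P deg K m"
      "D = A + B"
    by fastforce
  have "divisor_deg deg A \<le> k * m k"
    using AB(1) by (auto simp: capped_divisors_def divisor_deg_const filter_mset_eq_self)
  then show ?case
    using insert.IH[OF AB(2)] insert.hyps AB(3) by simp
qed

lemma capped_divisors_subset_divisors_upto:
  assumes "finite K" and "(\<Sum>r\<in>K. r * m r) \<le> N"
  shows "capped_divisors P deg K m \<subseteq> divisors_upto P deg N"
  using divisor_deg_capped_divisors_le[OF assms(1)] assms(2)
  by (fastforce simp: divisors_upto_def capped_divisors_def)

lemma capped_divisors_mono:
  assumes "K \<subseteq> K'"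
  shows "capped_divisors P deg K m \<subseteq> capped_divisors P deg K' m"
proof
  fix D assume D: "D \<in> capped_divisors P deg K m"
  have "size (filter_mset (\<lambda>x. deg x = r) D) \<le> m r" if "r \<in> K'" for r
  proof (cases "r \<in> K")
    case False
    then have "filter_mset (\<lambda>x. deg x = r) D = {#}"
      using D by (intro filter_mset_eq_empty) (auto simp: capped_divisors_def)
    then show ?thesis
      by (metis le0 size_empty)
  qed (use D in \<open>auto simp: capped_divisors_def\<close>)
  then show "D \<in> capped_divisors P deg K' m"
    using D assms by (auto simp: capped_divisors_def)
qed

subsection \<open>Divisors mixing places of degree 1 and of degree \<open>r\<close>\<close>

definition mixed_divisors :: "'a set \<Rightarrow> ('a \<Rightarrow> nat) \<Rightarrow> nat \<Rightarrow> nat \<Rightarrow> 'a multiset set" where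
  "mixed_divisors P deg N r =
    capped_divisors P deg {1, r} ((\<lambda>_. N div r)(1 := N mod r)) -
    capped_divisors P deg {1} ((\<lambda>_. N div r)(1 := N mod r))"

lemma weight_sum_mixed_divisors:
  assumes "1 < r" and fin: "\<forall>r. finite {p \<in> P. deg p = r}"
  shows "(\<Sum>D\<in>mixed_divisors P deg N r. divisor_weight q deg D) =
    truncated_factor P deg q 1 (N mod r) * (truncated_factor P deg q r (N div r) - 1)"
proof -
  let ?m = "(\<lambda>_. N div r)(1 := N mod r)"
  have "capped_divisors P deg {1} ?m \<subseteq> capped_divisors P deg {1, r} ?m"
    by (rule capped_divisors_mono) simp
  moreover have "finite (capped_divisors P deg {1, r} ?m)"
    by (rule finite_capped_divisors[OF _ fin]) simp
  ultimately have "(\<Sum>D\<in>capped_divisors P deg {1, r} ?m. divisor_weight q deg D) =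
      (\<Sum>D\<in>mixed_divisors P deg N r. divisor_weight q deg D) +
      (\<Sum>D\<in>capped_divisors P deg {1} ?m. divisor_weight q deg D)"
    unfolding mixed_divisors_def by (rule sum.subset_diff)
  moreover have "truncated_factor P deg q r 0 = 1"
    by (simp add: truncated_factor_def multichoose_def)
  ultimately show ?thesis
    using \<open>1 < r\<close> by (simp add: weight_sum_capped_divisors fin algebra_simps)
qed

lemma mixed_divisors_degrees:
  assumes "D \<in> mixed_divisors P deg N r"
  shows "\<forall>x\<in>#D. deg x \<in> {1, r}" and "\<exists>x\<in>#D. deg x = r"
  using assms by (auto simp: mixed_divisors_def capped_divisors_def)

lemma mixed_divisors_subset_divisors_upto:
  assumes "1 < r"
  shows "mixed_divisors P deg N r \<subseteq> divisors_upto P deg N"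
proof
  fix D assume D: "D \<in> mixed_divisors P deg N r"
  then have "D \<in> capped_divisors P deg {1, r} ((\<lambda>_. N div r)(1 := N mod r))"
    by (simp add: mixed_divisors_def)
  then have "divisor_deg deg D \<le> (\<Sum>k\<in>{1, r}. k * ((\<lambda>_. N div r)(1 := N mod r)) k)"
    by (rule divisor_deg_capped_divisors_le[rotated]) simp
  also have "\<dots> = N"
    using assms by simp
  finally show "D \<in> divisors_upto P deg N"
    using D by (auto simp: divisors_upto_def mixed_divisors_def capped_divisors_def)
qed

lemma finite_mixed_divisors:
  assumes "\<forall>r. finite {p \<in> P. deg p = r}"
  shows "finite (mixed_divisors P deg N r)"
  unfolding mixed_divisors_def by (intro finite_Diff finite_capped_divisors assms) simp

lemma weight_sum_degree_one_and_mixed_divisors: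
  assumes R: "finite R" "\<forall>r\<in>R. 1 < r" and fin: "\<forall>r. finite {p \<in> P. deg p = r}"
  shows "(\<Sum>D\<in>capped_divisors P deg {1} (\<lambda>_. N) \<union> (\<Union>r\<in>R. mixed_divisors P deg N r).
        divisor_weight q deg D) =
      truncated_factor P deg q 1 N +
      (\<Sum>r\<in>R. truncated_factor P deg q 1 (N mod r) * (truncated_factor P deg q r (N div r) - 1))"
proof -
  let ?w = "divisor_weight q deg" and ?T = "mixed_divisors P deg N"
  have "capped_divisors P deg {1} (\<lambda>_. N) \<inter> ?T r = {}" if "r \<in> R" for r
    using that R mixed_divisors_degrees(2)[of _ P deg N r]
    by (fastforce simp: capped_divisors_def)
  then have "sum ?w (capped_divisors P deg {1} (\<lambda>_. N) \<union> (\<Union>r\<in>R. ?T r)) =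
      sum ?w (capped_divisors P deg {1} (\<lambda>_. N)) + sum ?w (\<Union>r\<in>R. ?T r)"
    by (intro sum.union_disjoint finite_capped_divisors fin)
      (auto simp: R finite_mixed_divisors[OF fin])
  also have "sum ?w (\<Union>r\<in>R. ?T r) = (\<Sum>r\<in>R. sum ?w (?T r))"
  proof (rule sum.UNION_disjoint[OF R(1)])
    show "\<forall>r\<in>R. finite (?T r)"
      using finite_mixed_divisors[OF fin] by blast
    show "\<forall>r\<in>R. \<forall>r'\<in>R. r \<noteq> r' \<longrightarrow> ?T r \<inter> ?T r' = {}"
      using R(2) mixed_divisors_degrees[of _ P deg N] by fastforce
  qed
  also have "\<dots> = (\<Sum>r\<in>R. truncated_factor P deg q 1 (N mod r) *
      (truncated_factor P deg q r (N div r) - 1))"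
    using R(2) by (intro sum.cong refl weight_sum_mixed_divisors fin) simp
  finally show ?thesis
    by (simp add: weight_sum_capped_divisors fin)
qed

theorem theorem3p8:
  fixes P :: "'a set" and deg :: "'a \<Rightarrow> nat" and q g :: nat
  assumes q: "prime_power q"
    and g: "g \<ge> 2"
    and deg_pos: "\<forall>p\<in>P. deg p \<ge> 1"
    and fin: "\<forall>r. finite {p \<in> P. deg p = r}"
  shows
    "(\<forall>m :: nat \<Rightarrow> nat.
        B_num P deg 1 \<ge> 1 \<and> (\<Sum>r\<in>Delta2 P deg g. r * m r) \<le> g - 2 \<longrightarrow>
        Sigma2 P deg q g \<ge> real q ^ (g - 1) *
          (\<Prod>r\<in>Delta2 P deg g. \<Sum>b = 0..m r.
              real (multichoose (B_num P deg r) b) / real q ^ (r * b)))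
     \<and>
     (\<forall>R :: nat set. R \<subseteq> Delta2 P deg g - {1} \<longrightarrow>
        Sigma2 P deg q g \<ge>
          real q ^ (g - 1) * (\<Sum>b1 = 0..g - 2. real (multichoose (B_num P deg 1) b1) / real q ^ b1)
          + real q ^ (g - 1) * (\<Sum>r\<in>R.
              (\<Sum>b1 = 0..(g - 2) mod r. real (multichoose (B_num P deg 1) b1) / real q ^ b1)
              * ((\<Sum>b = 0..(g - 2) div r.
                    real (multichoose (B_num P deg r) b) / real q ^ (r * b)) - 1)))"
proof -
  have Delta2_finite: "finite (Delta2 P deg g)"
    by (rule finite_subset[of _ "{1..g - 2}"]) (auto simp: Delta2_def)
  have "Sigma2 P deg q g \<ge> real q ^ (g - 1) * (\<Prod>r\<in>Delta2 P deg g. truncated_factor P deg q r (m r))"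
    if "(\<Sum>r\<in>Delta2 P deg g. r * m r) \<le> g - 2" for m
    using Sigma2_ge_weight_sum[OF deg_pos fin capped_divisors_subset_divisors_upto[OF Delta2_finite that]]
    by (simp add: weight_sum_capped_divisors[OF Delta2_finite fin])
  moreover have "Sigma2 P deg q g \<ge> real q ^ (g - 1) * (truncated_factor P deg q 1 (g - 2) +
      (\<Sum>r\<in>R. truncated_factor P deg q 1 ((g - 2) mod r) *
        (truncated_factor P deg q r ((g - 2) div r) - 1)))"
    if "R \<subseteq> Delta2 P deg g - {1}" for R
  proof -
    have R: "finite R" "\<forall>r\<in>R. 1 < r"
      using that finite_subset[OF _ Delta2_finite] by (auto simp: Delta2_def)
    have "capped_divisors P deg {1} (\<lambda>_. g - 2) \<union> (\<Union>r\<in>R. mixed_divisors P deg (g - 2) r)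
        \<subseteq> divisors_upto P deg (g - 2)"
      using capped_divisors_subset_divisors_upto[of "{1}" "\<lambda>_. g - 2"]
        mixed_divisors_subset_divisors_upto R(2) by fastforce
    from Sigma2_ge_weight_sum[OF deg_pos fin this] show ?thesis
      by (simp only: weight_sum_degree_one_and_mixed_divisors[OF R fin])
  qed
  ultimately show ?thesis
    by (simp add: truncated_factor_def distrib_left)
qed

end
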